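(* Assume Assumption (A). Let $U\subseteq\mathbb{C}$ be compact. Then there exist $N=N(U)\in\mathbb{N}$ and $C>0$ such that for all $n\ge N$ and all $\lambda\in U$, the matrix $D-\lambda I$ is invertible and $$\big\|\ell_0+P(D-\lambda I)^{-1}D\mathbf 1-\varepsilon_\lambda\big\|\le\frac1{\sqrt n}\Big(\frac Cn\Big)^n,$$ where $\|\cdot\|$ is the supremum norm on $[-1,0]$.
   Context: For $\lambda\in\mathbb{C}$, $\varepsilon_\lambda(\theta)=e^{\lambda\theta}$, $\theta\in[-1,0]$. For each $n\in\mathbb{N}$ a mesh $-1\le\theta_n<\dots<\theta_1<\theta_0=0$ is given (the nodes may depend on $n$), with Lagrange polynomials $\ell_j(\theta)=\prod_{0\le m\le n,\,m\neq j}\frac{\theta-\theta_m}{\theta_j-\theta_m}$, $j=0,\dots,n$. $D$ is the $n\times n$ matrix with entries $D_{ij}=\ell_j'(\theta_i)$, $i,j=1,\dots,n$; $\mathbf 1=(1,\dots,1)^T\in\mathbb{R}^n$; $I$ is the identity matrix. For $y\in\mathbb{C}^n$, $Py=\sum_{j=1}^n y_j\ell_j$. Assumption (A): with the reduced Lagrange polynomials $\tilde\ell_j(\theta)=\prod_{1\le m\le n,\,m\neq j}\frac{\theta-\theta_m}{\theta_j-\theta_m}$, $j=1,\dots,n$, the Lebesgue constants $\tilde\Lambda_n=\max_{\theta\in[-1,0]}\sum_{j=1}^n|\tilde\ell_j(\theta)|$ satisfy $\tilde\Lambda_n/n\to0$ as $n\to\infty$. *)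

theory Defs
  imports "HOL-Analysis.Analysis"
begin

definition is_mesh_family :: "(nat \<Rightarrow> nat \<Rightarrow> real) \<Rightarrow> bool" where
  "is_mesh_family th \<longleftrightarrow> (\<forall>n. th n 0 = 0 \<and> -1 \<le> th n n \<and>
     (\<forall>j<n. th n (Suc j) < th n j))"

definition lagr :: "(nat \<Rightarrow> nat \<Rightarrow> real) \<Rightarrow> nat \<Rightarrow> nat \<Rightarrow> real \<Rightarrow> real" where
  "lagr th n j t = (\<Prod>m\<in>{0..n} - {j}. (t - th n m) / (th n j - th n m))"

definition rlagr :: "(nat \<Rightarrow> nat \<Rightarrow> real) \<Rightarrow> nat \<Rightarrow> nat \<Rightarrow> real \<Rightarrow> real" where
  "rlagr th n j t = (\<Prod>m\<in>{1..n} - {j}. (t - th n m) / (th n j - th n m))"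

definition rlebesgue :: "(nat \<Rightarrow> nat \<Rightarrow> real) \<Rightarrow> nat \<Rightarrow> real" where
  "rlebesgue th n = (SUP t\<in>{-1..0}. \<Sum>j=1..n. \<bar>rlagr th n j t\<bar>)"

definition Dmat :: "(nat \<Rightarrow> nat \<Rightarrow> real) \<Rightarrow> nat \<Rightarrow> nat \<Rightarrow> nat \<Rightarrow> complex" where
  "Dmat th n i j = complex_of_real (deriv (lagr th n j) (th n i))"

text \<open>n x n matrices as functions on indices 1..n: E is a two-sided inverse of A.\<close>
definition is_inverse :: "nat \<Rightarrow> (nat \<Rightarrow> nat \<Rightarrow> complex) \<Rightarrow> (nat \<Rightarrow> nat \<Rightarrow> complex) \<Rightarrow> bool" where
  "is_inverse n A E \<longleftrightarrow>
     (\<forall>i\<in>{1..n}. \<forall>k\<in>{1..n}.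
        (\<Sum>j=1..n. A i j * E j k) = (if i = k then 1 else 0) \<and>
        (\<Sum>j=1..n. E i j * A j k) = (if i = k then 1 else 0))"

definition invertible_nmat :: "nat \<Rightarrow> (nat \<Rightarrow> nat \<Rightarrow> complex) \<Rightarrow> bool" where
  "invertible_nmat n A \<longleftrightarrow> (\<exists>E. is_inverse n A E)"

definition DmI :: "(nat \<Rightarrow> nat \<Rightarrow> real) \<Rightarrow> nat \<Rightarrow> complex \<Rightarrow> nat \<Rightarrow> nat \<Rightarrow> complex" where
  "DmI th n lam i j = Dmat th n i j - (if i = j then lam else 0)"

definition yvec :: "(nat \<Rightarrow> nat \<Rightarrow> real) \<Rightarrow> nat \<Rightarrow> (nat \<Rightarrow> nat \<Rightarrow> complex) \<Rightarrow> nat \<Rightarrow> complex" where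
  "yvec th n E i = (\<Sum>k=1..n. E i k * (\<Sum>m=1..n. Dmat th n k m))"

definition err_fun :: "(nat \<Rightarrow> nat \<Rightarrow> real) \<Rightarrow> nat \<Rightarrow> complex \<Rightarrow> (nat \<Rightarrow> complex) \<Rightarrow> real \<Rightarrow> complex" where
  "err_fun th n lam y t = complex_of_real (lagr th n 0 t)
     + (\<Sum>j=1..n. y j * complex_of_real (lagr th n j t)) - exp (lam * complex_of_real t)"

definition supnorm :: "(real \<Rightarrow> complex) \<Rightarrow> real" where
  "supnorm f = (SUP t\<in>{-1..0}. cmod (f t))"

end

theory Submission
  imports Defs "HOL-Computational_Algebra.Polynomial" "Jordan_Normal_Form.Determinant"
begin

text \<open>
  The collocation polynomial \<open>q = \<ell>\<^sub>0 + P y\<close> has degree \<open>n\<close>, \<open>q(0) = 1\<close> and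
  \<open>q' = \<lambda> q\<close> at \<open>\<theta>\<^sub>1, \<dots>, \<theta>\<^sub>n\<close>; hence \<open>q' = \<lambda> I q\<close>, where \<open>I\<close> interpolates at these nodes.
  Let \<open>a\<close> be the leading coefficient of \<open>q\<close>. Subtracting \<open>a\<close> times the monic Chebyshev
  polynomial of \<open>[-1,0]\<close>, Lebesgue's inequality gives \<open>\<parallel>I q - q\<parallel> \<le> (1 + \<Lambda>) |a| 2\<^sup>1\<^sup>-\<^sup>2\<^sup>n\<close>, and
  the error \<open>E = q - e\<^sup>\<lambda>\<^sup>t\<close> solves \<open>E' = \<lambda> E + \<lambda> (I q - q)\<close>, \<open>E(0) = 0\<close>, so it is of the same size.
  Conversely \<open>n a = \<lambda> \<cdot>\<close> (top coefficient of \<open>I q\<close>), and \<open>I q\<close> is uniformly close to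
  \<open>e\<^sup>\<lambda>\<^sup>t\<close>; comparing it with the Taylor polynomial and bounding top coefficients through the
  Chebyshev nodes yields \<open>|a| 2\<^sup>-\<^sup>2\<^sup>n \<lesssim> R\<^sup>n / n! + (1 + \<Lambda>)/n \<cdot> |a| 2\<^sup>-\<^sup>2\<^sup>n\<close>. Since
  \<open>\<Lambda>/n \<rightarrow> 0\<close> the last term is absorbed, and \<open>n\<^sup>n \<le> e\<^sup>n n!\<close> turns \<open>R\<^sup>n / n!\<close> into
  \<open>(C/n)\<^sup>n / \<surd>n\<close>. The same estimate with \<open>q(0) = 0\<close> forces \<open>q = 0\<close>, so \<open>D - \<lambda> I\<close> is injective.
\<close>

(* Jordan_Normal_Form brings HOL-Algebra's module.smult into scope, which would shadow the
   polynomial smult. *)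
hide_const (open) module.smult

section \<open>Lagrange interpolation\<close>

definition lagrange_basis :: "'i set \<Rightarrow> ('i \<Rightarrow> 'a::field) \<Rightarrow> 'i \<Rightarrow> 'a poly" where
  "lagrange_basis S x j =
     smult (1 / (\<Prod>k\<in>S-{j}. x j - x k)) (\<Prod>k\<in>S-{j}. [:- x k, 1:])"

lemma poly_lagrange_basis:
  "poly (lagrange_basis S x j) z = (\<Prod>k\<in>S-{j}. (z - x k) / (x j - x k))"
  by (simp add: lagrange_basis_def poly_prod prod_dividef)

lemma degree_prod_linear:
  "finite S \<Longrightarrow> degree (\<Prod>k\<in>S. [:- x k, 1::'a::field:]) = card S"
  by (subst degree_prod_sum_eq) auto

lemma degree_lagrange_basis:
  assumes "finite S" "j \<in> S"
  shows "degree (lagrange_basis S x j) \<le> card S - 1"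
  using assms degree_smult_le[of _ "\<Prod>k\<in>S-{j}. [:- x k, 1:]"]
  by (simp add: lagrange_basis_def degree_prod_linear)

lemma coeff_lagrange_basis_top:
  assumes "finite S" "j \<in> S"
  shows "coeff (lagrange_basis S x j) (card S - 1) = 1 / (\<Prod>k\<in>S-{j}. x j - x k)"
proof -
  have "lead_coeff (\<Prod>k\<in>S-{j}. [:- x k, 1:]) = 1"
    by (simp add: lead_coeff_prod)
  then show ?thesis
    using assms by (simp add: lagrange_basis_def degree_prod_linear)
qed

lemma poly_lagrange_basis_node:
  assumes "finite S" "inj_on x S" "i \<in> S" "j \<in> S"
  shows "poly (lagrange_basis S x j) (x i) = (if i = j then 1 else 0)"
proof (cases "i = j")
  case True
  have "x j \<noteq> x k" if "k \<in> S - {j}" for k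
    using assms that by (metis DiffD1 DiffD2 inj_on_contraD singletonI)
  then show ?thesis
    using True by (simp add: poly_lagrange_basis)
next
  case False
  then show ?thesis
    using assms by (auto simp: poly_lagrange_basis intro!: prod_zero)
qed

lemma lagrange_interpolation:
  fixes x :: "'i \<Rightarrow> 'a::field"
  assumes "finite S" "inj_on x S" "degree r < card S"
  shows "r = (\<Sum>j\<in>S. smult (poly r (x j)) (lagrange_basis S x j))"
proof (rule poly_eqI_degree[where A = "x ` S"])
  have card: "card (x ` S) = card S"
    using assms by (simp add: card_image)
  then show "degree r < card (x ` S)"
    using assms by simp
  have "degree (\<Sum>j\<in>S. smult (poly r (x j)) (lagrange_basis S x j)) \<le> card S - 1"
    using assms(1)
    by (intro degree_sum_le) (metis order_trans[OF degree_smult_le] degree_lagrange_basis)+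
  then show "degree (\<Sum>j\<in>S. smult (poly r (x j)) (lagrange_basis S x j)) < card (x ` S)"
    using assms card by linarith
next
  fix z assume "z \<in> x ` S"
  then obtain i where i: "i \<in> S" "z = x i" by auto
  have "poly (\<Sum>j\<in>S. smult (poly r (x j)) (lagrange_basis S x j)) z
      = (\<Sum>j\<in>S. poly r (x j) * (if i = j then 1 else 0))"
    using i assms by (simp add: poly_sum poly_lagrange_basis_node)
  also have "\<dots> = poly r z"
    using i assms(1) by (simp add: if_distrib cong: if_cong)
  finally show "poly r z = poly (\<Sum>j\<in>S. smult (poly r (x j)) (lagrange_basis S x j)) z" ..
qed

lemma coeff_top_lagrange:
  fixes x :: "'i \<Rightarrow> 'a::field"
  assumes "finite S" "inj_on x S" "degree r < card S"
  shows "coeff r (card S - 1) = (\<Sum>j\<in>S. poly r (x j) / (\<Prod>k\<in>S-{j}. x j - x k))"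
proof -
  have "coeff r (card S - 1)
      = (\<Sum>j\<in>S. poly r (x j) * coeff (lagrange_basis S x j) (card S - 1))"
    by (subst lagrange_interpolation[OF assms]) (simp add: coeff_sum)
  also have "\<dots> = (\<Sum>j\<in>S. poly r (x j) / (\<Prod>k\<in>S-{j}. x j - x k))"
    using assms(1) by (intro sum.cong refl) (auto simp: coeff_lagrange_basis_top[unfolded One_nat_def])
  finally show ?thesis .
qed

section \<open>Chebyshev polynomials\<close>

fun cheb_poly :: "nat \<Rightarrow> real poly" where
  "cheb_poly 0 = 1"
| "cheb_poly (Suc 0) = [:0, 1:]"
| "cheb_poly (Suc (Suc n)) = smult 2 (pCons 0 (cheb_poly (Suc n))) - cheb_poly n"

lemma poly_cheb_poly_cos: "poly (cheb_poly n) (cos x) = cos (real n * x)"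
proof (induction n rule: cheb_poly.induct)
  case (3 n)
  have "cos (real (Suc (Suc n)) * x) = 2 * cos x * cos (real (Suc n) * x) - cos (real n * x)"
    using cos_add[of "real (Suc n) * x" x] cos_diff[of "real (Suc n) * x" x]
    by (simp add: algebra_simps)
  then show ?case
    using "3.IH" by simp
qed auto

lemma degree_coeff_cheb_poly:
  "degree (cheb_poly n) = n \<and> coeff (cheb_poly n) n = (if n = 0 then 1 else 2 ^ (n - 1))"
proof (induction n rule: cheb_poly.induct)
  case (3 n)
  let ?p = "smult 2 (pCons 0 (cheb_poly (Suc n)))"
  have "coeff (cheb_poly (Suc n)) (Suc n) \<noteq> 0"
    using "3.IH"(1) by simp
  then have deg_p: "degree ?p = Suc (Suc n)"
    using "3.IH"(1) by (metis degree_pCons_eq degree_smult_eq leading_coeff_0_iff zero_neq_numeral)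
  moreover have "degree (- cheb_poly n) < degree ?p"
    using "3.IH"(2) deg_p by simp
  then have "degree (?p + - cheb_poly n) = degree ?p"
    by (rule degree_add_eq_left)
  ultimately have "degree (?p - cheb_poly n) = Suc (Suc n)"
    by simp
  moreover have "coeff (cheb_poly n) (Suc (Suc n)) = 0"
    using "3.IH"(2) by (simp add: coeff_eq_0)
  ultimately show ?case
    using "3.IH"(1) by simp
qed auto

lemma abs_poly_cheb_poly_le: "\<bar>x\<bar> \<le> 1 \<Longrightarrow> \<bar>poly (cheb_poly n) x\<bar> \<le> 1"
proof -
  assume "\<bar>x\<bar> \<le> 1"
  then have "poly (cheb_poly n) x = cos (real n * arccos x)"
    using poly_cheb_poly_cos[of n "arccos x"] by simp
  then show ?thesis
    by simp
qed

lemma abs_pderiv_cheb_poly_cos: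
  assumes "0 < x" "x < pi"
  shows "\<bar>poly (pderiv (cheb_poly n)) (cos x)\<bar> * sin x = real n * \<bar>sin (real n * x)\<bar>"
proof -
  have "((\<lambda>x. poly (cheb_poly n) (cos x)) has_real_derivative
          poly (pderiv (cheb_poly n)) (cos x) * - sin x) (at x)"
    by (rule DERIV_chain2[OF poly_DERIV DERIV_cos])
  moreover have "((\<lambda>x. poly (cheb_poly n) (cos x)) has_real_derivative
          - sin (real n * x) * real n) (at x)"
    unfolding poly_cheb_poly_cos by (auto intro!: derivative_eq_intros)
  ultimately have "poly (pderiv (cheb_poly n)) (cos x) * sin x = real n * sin (real n * x)"
    by (auto dest: DERIV_unique simp: algebra_simps)
  moreover have "sin x > 0"
    using assms by (intro sin_gt_zero)
  then have "\<bar>poly (pderiv (cheb_poly n)) (cos x)\<bar> * sin x = \<bar>poly (pderiv (cheb_poly n)) (cos x) * sin x\<bar>"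
    by (simp add: abs_mult)
  ultimately show ?thesis
    by (simp add: abs_mult)
qed

text \<open>The zeros of \<open>cheb_poly N\<close>, moved from \<open>[-1,1]\<close> to \<open>[-1,0]\<close> by \<open>t \<mapsto> (t - 1) / 2\<close>.\<close>

definition cheb_angle :: "nat \<Rightarrow> nat \<Rightarrow> real" where
  "cheb_angle N k = pi * real (2 * k + 1) / (2 * real N)"

definition cheb_node :: "nat \<Rightarrow> nat \<Rightarrow> real" where
  "cheb_node N k = (cos (cheb_angle N k) - 1) / 2"

definition cheb_monic :: "nat \<Rightarrow> real poly" where
  "cheb_monic N = smult (1 / 2 ^ (2 * N - 1)) (cheb_poly N \<circ>\<^sub>p [:1, 2:])"

lemma cheb_angle_bounds:
  assumes "k < N"
  shows "0 < cheb_angle N k" "cheb_angle N k < pi"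
proof -
  have "real (2 * k + 1) < 2 * real N"
    using assms by linarith
  then show "cheb_angle N k < pi"
    using assms by (simp add: cheb_angle_def divide_less_eq)
  show "0 < cheb_angle N k"
    using assms by (simp add: cheb_angle_def)
qed

lemma cos_mult_cheb_angle:
  assumes "k < N"
  shows "cos (real N * cheb_angle N k) = 0"
proof -
  have "real N * cheb_angle N k = pi * real (Suc (2 * k)) / 2"
    using assms by (simp add: cheb_angle_def)
  then show ?thesis
    by (simp only: cos_pi_eq_zero)
qed

lemma cheb_node_cos: "2 * cheb_node N k + 1 = cos (cheb_angle N k)"
  by (simp add: cheb_node_def field_simps)

lemma inj_on_cheb_node: "inj_on (cheb_node N) {..<N}"
proof (rule inj_onI)
  fix a b assume a: "a \<in> {..<N}" and b: "b \<in> {..<N}" and "cheb_node N a = cheb_node N b"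
  then have "cos (cheb_angle N a) = cos (cheb_angle N b)"
    by (simp add: cheb_node_def)
  moreover have "0 \<le> cheb_angle N a" "cheb_angle N a \<le> pi" "0 \<le> cheb_angle N b" "cheb_angle N b \<le> pi"
    using cheb_angle_bounds[of a N] cheb_angle_bounds[of b N] a b by auto
  ultimately have "cheb_angle N a = cheb_angle N b"
    using cos_inj_pi by blast
  then have "real (2 * a + 1) = real (2 * b + 1)"
    using a by (auto simp: cheb_angle_def)
  then show "a = b"
    by simp
qed

lemma cheb_node_in_Icc: "cheb_node N k \<in> {-1..0}"
  using cheb_node_cos[of N k] cos_ge_minus_one[of "cheb_angle N k"] cos_le_one[of "cheb_angle N k"]
  unfolding atLeastAtMost_iff by linarith

lemma poly_cheb_monic: "poly (cheb_monic N) t = poly (cheb_poly N) (2 * t + 1) / 2 ^ (2 * N - 1)"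
  by (simp add: cheb_monic_def poly_pcompose algebra_simps)

lemma power_two_double_minus_one:
  assumes "N \<ge> 1"
  shows "(2::real) ^ (2 * N - 1) = 2 * 4 ^ (N - 1)"
proof -
  obtain m where "N = Suc m"
    using assms by (cases N) auto
  then show ?thesis
    by (simp add: power_mult)
qed

lemma degree_coeff_cheb_monic:
  assumes "N \<ge> 1"
  shows "degree (cheb_monic N) = N" "coeff (cheb_monic N) N = 1"
proof -
  have dc: "degree (cheb_poly N) = N" "coeff (cheb_poly N) N = 2 ^ (N - 1)"
    using degree_coeff_cheb_poly[of N] assms by auto
  then show "degree (cheb_monic N) = N"
    by (simp add: cheb_monic_def degree_pcompose)
  have "lead_coeff (cheb_poly N \<circ>\<^sub>p [:1, 2:]) = 2 ^ (N - 1) * 2 ^ N"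
    using dc by (subst lead_coeff_comp) auto
  also have "\<dots> = 2 ^ (N - 1 + N)"
    by (simp add: power_add)
  also have "N - 1 + N = 2 * N - 1"
    using assms by simp
  finally show "coeff (cheb_monic N) N = 1"
    using dc by (simp add: cheb_monic_def degree_pcompose)
qed

lemma prod_cheb_node_eq_cheb_monic:
  assumes "N \<ge> 1"
  shows "(\<Prod>k<N. [:- cheb_node N k, 1:]) = cheb_monic N"
proof (rule poly_eqI_degree_lead_coeff[where n = N and A = "cheb_node N ` {..<N}"])
  have deg: "degree (\<Prod>k<N. [:- cheb_node N k, 1:]) = N"
    by (simp add: degree_prod_linear)
  then show "degree (\<Prod>k<N. [:- cheb_node N k, 1:]) \<le> N"
    by simp
  show "coeff (\<Prod>k<N. [:- cheb_node N k, 1:]) N = coeff (cheb_monic N) N"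
    using deg degree_coeff_cheb_monic[OF assms] lead_coeff_prod[of "\<lambda>k. [:- cheb_node N k, 1:]" "{..<N}"]
    by simp
  show "N \<le> card (cheb_node N ` {..<N})"
    using inj_on_cheb_node by (simp add: card_image)
  show "degree (cheb_monic N) \<le> N"
    using degree_coeff_cheb_monic[OF assms] by simp
  fix z assume "z \<in> cheb_node N ` {..<N}"
  then obtain k where k: "k < N" "z = cheb_node N k" by auto
  then have "poly (cheb_monic N) z = 0"
    by (simp add: poly_cheb_monic cheb_node_cos poly_cheb_poly_cos cos_mult_cheb_angle)
  moreover have "poly (\<Prod>k<N. [:- cheb_node N k, 1:]) z = 0"
    using k by (auto simp: poly_prod intro!: prod_zero)
  ultimately show "poly (\<Prod>k<N. [:- cheb_node N k, 1:]) z = poly (cheb_monic N) z"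
    by simp
qed

lemma abs_poly_cheb_monic_le:
  assumes "t \<in> {-1..0}"
  shows "\<bar>poly (cheb_monic N) t\<bar> \<le> 1 / 2 ^ (2 * N - 1)"
proof -
  have "\<bar>poly (cheb_poly N) (2 * t + 1)\<bar> \<le> 1"
    using assms by (intro abs_poly_cheb_poly_le) auto
  then show ?thesis
    by (simp add: poly_cheb_monic divide_right_mono)
qed

lemma poly_pderiv_prod_linear_at_root:
  fixes x :: "'i \<Rightarrow> 'a::field"
  assumes "finite S" "j \<in> S"
  shows "poly (pderiv (\<Prod>k\<in>S. [:- x k, 1:])) (x j) = (\<Prod>k\<in>S-{j}. x j - x k)"
proof -
  let ?Q = "\<Prod>k\<in>S-{j}. [:- x k, 1:]"
  have "(\<Prod>k\<in>S. [:- x k, 1:]) = [:- x j, 1:] * ?Q"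
    using assms by (simp add: prod.remove)
  then have "pderiv (\<Prod>k\<in>S. [:- x k, 1:]) = [:- x j, 1:] * pderiv ?Q + ?Q * pderiv [:- x j, 1:]"
    by (simp only: pderiv_mult)
  then show ?thesis
    by (simp add: pderiv_pCons poly_prod)
qed

lemma abs_pderiv_cheb_poly_at_node_ge:
  assumes "j < N"
  shows "real N \<le> \<bar>poly (pderiv (cheb_poly N)) (cos (cheb_angle N j))\<bar>"
proof -
  have "\<bar>sin (real N * cheb_angle N j)\<bar> = 1"
    using sin_cos_squared_add[of "real N * cheb_angle N j"] cos_mult_cheb_angle[OF assms]
    by (auto simp: power2_eq_1_iff)
  then have "\<bar>poly (pderiv (cheb_poly N)) (cos (cheb_angle N j))\<bar> * sin (cheb_angle N j) = real N"
    using abs_pderiv_cheb_poly_cos[OF cheb_angle_bounds[OF assms]] by simp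
  moreover have "0 < sin (cheb_angle N j)" "sin (cheb_angle N j) \<le> 1"
    using cheb_angle_bounds[OF assms] by (auto intro: sin_gt_zero)
  ultimately show ?thesis
    by (metis abs_ge_zero mult_left_le)
qed

lemma prod_cheb_node_diff_ge:
  assumes "j < N"
  shows "real N / 4 ^ (N - 1) \<le> \<bar>\<Prod>k\<in>{..<N}-{j}. cheb_node N j - cheb_node N k\<bar>"
proof -
  have N: "N \<ge> 1"
    using assms by simp
  have "(\<Prod>k\<in>{..<N}-{j}. cheb_node N j - cheb_node N k) = poly (pderiv (cheb_monic N)) (cheb_node N j)"
    using assms by (simp add: poly_pderiv_prod_linear_at_root flip: prod_cheb_node_eq_cheb_monic[OF N])
  also have "\<dots> = poly (pderiv (cheb_poly N)) (cos (cheb_angle N j)) / 4 ^ (N - 1)"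
    using power_two_double_minus_one[OF N] cheb_node_cos[of N j]
    by (simp add: cheb_monic_def pderiv_smult pderiv_pcompose pderiv_pCons poly_pcompose algebra_simps)
  finally show ?thesis
    using abs_pderiv_cheb_poly_at_node_ge[OF assms] by (simp add: divide_right_mono)
qed

lemma poly_map_poly_of_real:
  "poly (map_poly of_real p) (of_real t) = (of_real (poly p t) :: 'a::{real_algebra_1,comm_semiring_1})"
  by (induction p) (auto simp: map_poly_pCons)

lemma pderiv_map_poly_of_real:
  "pderiv (map_poly of_real p) = (map_poly of_real (pderiv p) :: 'a::real_field poly)"
  by (rule poly_eqI) (simp add: coeff_map_poly coeff_pderiv)

lemma monic_poly_small_on_Icc:
  assumes "N \<ge> 1"
  obtains M :: "complex poly"
  where "degree M = N" "coeff M N = 1"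
    "\<And>t. t \<in> {-1..0} \<Longrightarrow> cmod (poly M (of_real t)) \<le> 1 / 2 ^ (2 * N - 1)"
proof
  let ?M = "map_poly complex_of_real (cheb_monic N)"
  show "degree ?M = N" "coeff ?M N = 1"
    using degree_coeff_cheb_monic[OF assms] by (simp_all add: degree_map_poly coeff_map_poly)
  show "cmod (poly ?M (of_real t)) \<le> 1 / 2 ^ (2 * N - 1)" if "t \<in> {-1..0}" for t
    using abs_poly_cheb_monic_le[OF that] by (simp add: poly_map_poly_of_real)
qed

text \<open>Read off the top coefficient by Lagrange interpolation at the \<open>m + 1\<close> Chebyshev nodes, whose
  weights \<open>1 / \<Prod>(x\<^sub>j - x\<^sub>k)\<close> are at most \<open>4\<^sup>m / (m + 1)\<close>.\<close>

lemma norm_coeff_le_Chebyshev: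
  fixes r :: "complex poly"
  assumes deg: "degree r \<le> m"
    and bound: "\<And>t. t \<in> {-1..0} \<Longrightarrow> cmod (poly r (of_real t)) \<le> B"
  shows "cmod (coeff r m) \<le> 4 ^ m * B"
proof -
  let ?N = "Suc m"
  let ?x = "\<lambda>k. complex_of_real (cheb_node ?N k)"
  have "cmod (poly r 0) \<le> B"
    using bound[of 0] by simp
  then have B: "0 \<le> B"
    using norm_ge_zero order_trans by blast
  have "inj_on ?x {..<?N}"
    using inj_on_cheb_node by (auto simp: inj_on_def)
  then have "coeff r m = (\<Sum>j<?N. poly r (?x j) / (\<Prod>k\<in>{..<?N}-{j}. ?x j - ?x k))"
    using coeff_top_lagrange[of "{..<?N}" ?x r] deg by simp
  also have "\<dots> = (\<Sum>j<?N. poly r (?x j) / of_real (\<Prod>k\<in>{..<?N}-{j}. cheb_node ?N j - cheb_node ?N k))"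
    by simp
  finally have "cmod (coeff r m)
      \<le> (\<Sum>j<?N. cmod (poly r (?x j)) / \<bar>\<Prod>k\<in>{..<?N}-{j}. cheb_node ?N j - cheb_node ?N k\<bar>)"
    by (metis (no_types, lifting) norm_divide norm_of_real norm_sum sum.cong)
  also have "\<dots> \<le> (\<Sum>j<?N. B / (real ?N / 4 ^ m))"
  proof (intro sum_mono frac_le B)
    fix j assume "j \<in> {..<?N}"
    then show "real ?N / 4 ^ m \<le> \<bar>\<Prod>k\<in>{..<?N}-{j}. cheb_node ?N j - cheb_node ?N k\<bar>"
      using prod_cheb_node_diff_ge[of j ?N] by simp
    show "cmod (poly r (?x j)) \<le> B"
      using bound cheb_node_in_Icc by blast
  qed simp
  also have "\<dots> = 4 ^ m * B"
    by simp
  finally show ?thesis .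
qed

section \<open>Exponential estimates\<close>

lemma norm_mult_of_real_le:
  assumes "cmod lam \<le> R" "s \<in> {-1..0}"
  shows "cmod (lam * complex_of_real s) \<le> R"
proof -
  have "0 \<le> R"
    using assms(1) norm_ge_zero[of lam] by linarith
  then have "cmod lam * \<bar>s\<bar> \<le> R * 1"
    using assms by (intro mult_mono) auto
  then show ?thesis
    by (simp add: norm_mult)
qed

lemma norm_exp_mult_of_real_le:
  "cmod lam \<le> R \<Longrightarrow> s \<in> {-1..0} \<Longrightarrow> cmod (exp (lam * complex_of_real s)) \<le> exp R"
  using norm_exp[of "lam * complex_of_real s"] norm_mult_of_real_le by fastforce

text \<open>Variation of constants for \<open>E' = \<lambda> E + g\<close> on \<open>[-1,0]\<close>, started from \<open>E 0 = 0\<close>.\<close>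

lemma norm_linear_ode_solution_le:
  fixes E g :: "real \<Rightarrow> complex"
  assumes deriv: "\<And>s. s \<in> {-1..0} \<Longrightarrow> (E has_vector_derivative lam * E s + g s) (at s)"
    and E0: "E 0 = 0" and lam: "cmod lam \<le> R"
    and g: "\<And>s. s \<in> {-1..0} \<Longrightarrow> cmod (g s) \<le> G"
    and t: "t \<in> {-1..0}"
  shows "cmod (E t) \<le> exp (2 * R) * G"
proof -
  define F where "F s = exp (- lam * complex_of_real s) * E s" for s
  have "cmod (g 0) \<le> G"
    using g by simp
  then have R: "0 \<le> R" "0 \<le> G"
    using lam norm_ge_zero[of lam] norm_ge_zero[of "g 0"] by linarith+
  have F': "(F has_vector_derivative exp (- lam * complex_of_real s) * g s) (at s)"
    if "s \<in> {-1..0}" for s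
  proof -
    have "((\<lambda>s. exp (- lam * complex_of_real s)) has_vector_derivative
            - lam * exp (- lam * complex_of_real s)) (at s)"
      by (rule has_vector_derivative_real_field) (auto intro!: derivative_eq_intros)
    from has_vector_derivative_mult[OF this deriv[OF that]] show ?thesis
      unfolding F_def by (simp add: algebra_simps)
  qed
  have bound_F': "cmod (exp (- lam * complex_of_real s) * g s) \<le> exp R * G" if "s \<in> {-1..0}" for s
  proof -
    have "cmod (exp (- lam * complex_of_real s)) \<le> exp R"
      using norm_exp_mult_of_real_le[of "- lam" R s] lam that by simp
    then show ?thesis
      using g[OF that] by (simp add: norm_mult mult_mono)
  qed
  have "cmod (F 0 - F t) \<le> exp R * G * 0 - exp R * G * t"
  proof (cases "t = 0")
    case False
    then have "t < 0"
      using t by simp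
    moreover have "isCont F s" if "s \<in> {t..0}" for s
      using F'[of s] t that by (auto intro: has_vector_derivative_continuous)
    then have "continuous_on {t..0} F"
      by (intro continuous_at_imp_continuous_on) auto
    ultimately show ?thesis
    proof (rule differentiable_bound_general[where \<phi> = "\<lambda>s. exp R * G * s"])
      fix s assume "t < s" "s < 0"
      then have s: "s \<in> {-1..0}"
        using t by simp
      show "(F has_vector_derivative exp (- lam * complex_of_real s) * g s) (at s)"
        using F'[OF s] .
      show "cmod (exp (- lam * complex_of_real s) * g s) \<le> exp R * G"
        using bound_F'[OF s] .
      show "((\<lambda>s. exp R * G * s) has_vector_derivative exp R * G) (at s)"
        by (auto intro!: derivative_eq_intros)
    qed (intro continuous_intros)
  qed simp
  moreover have "exp R * G * (- t) \<le> exp R * G * 1"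
    using t R by (intro mult_left_mono) auto
  ultimately have "cmod (F t) \<le> exp R * G"
    using E0 by (simp add: F_def norm_minus_commute)
  then have "cmod (exp (lam * complex_of_real t) * F t) \<le> exp R * (exp R * G)"
    using norm_exp_mult_of_real_le[OF lam t] by (simp add: norm_mult mult_mono)
  moreover have "exp (lam * complex_of_real t) * F t = E t"
    by (simp add: F_def mult.assoc flip: exp_add)
  moreover have "exp R * (exp R * G) = exp (2 * R) * G"
    by (simp add: mult.assoc flip: exp_add)
  ultimately show ?thesis
    by simp
qed

definition exp_taylor_poly :: "complex \<Rightarrow> nat \<Rightarrow> complex poly" where
  "exp_taylor_poly lam m = (\<Sum>k\<le>m. monom (lam ^ k / fact k) k)"

lemma poly_exp_taylor_poly: "poly (exp_taylor_poly lam m) z = (\<Sum>k\<le>m. (lam * z) ^ k / fact k)"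
  by (simp add: exp_taylor_poly_def poly_sum poly_monom power_mult_distrib)

lemma degree_exp_taylor_poly: "degree (exp_taylor_poly lam m) \<le> m"
  unfolding exp_taylor_poly_def
  by (rule degree_sum_le) (auto intro: order_trans[OF degree_monom_le])

lemma coeff_exp_taylor_poly_top: "coeff (exp_taylor_poly lam m) m = lam ^ m / fact m"
  by (simp add: exp_taylor_poly_def coeff_sum coeff_monom)

lemma norm_exp_minus_taylor_le:
  fixes z :: complex
  assumes "cmod z \<le> R"
  shows "cmod (exp z - (\<Sum>k\<le>m. z ^ k / fact k)) \<le> exp R * R ^ Suc m / fact m"
proof -
  have R: "0 \<le> R"
    using assms norm_ge_zero order_trans by blast
  have "cmod (exp z - (\<Sum>k\<le>m. exp 0 * (z - 0) ^ k / fact k)) \<le> exp R * cmod (z - 0) ^ Suc m / fact m"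
  proof (rule field_Taylor[where S = "cball 0 R" and f = "\<lambda>_. exp"])
    show "(exp has_field_derivative exp x) (at x within cball 0 R)" for x :: complex
      by (rule DERIV_subset[OF DERIV_exp]) auto
    show "cmod (exp x) \<le> exp R" if "x \<in> cball 0 R" for x :: complex
      using that norm_exp[of x] by (meson exp_le_cancel_iff mem_cball_0 order_trans)
  qed (use assms R in auto)
  also have "\<dots> \<le> exp R * R ^ Suc m / fact m"
    using assms by (intro divide_right_mono mult_left_mono power_mono) auto
  finally show ?thesis
    by simp
qed

text \<open>Compare \<open>U\<close> with the Taylor polynomial of \<open>c e\<^sup>\<lambda>\<^sup>t\<close> and apply the Chebyshev bound.\<close>

lemma norm_coeff_le_near_exp:
  fixes U :: "complex poly"
  assumes deg: "degree U \<le> m" and lam: "cmod lam \<le> R"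
    and near: "\<And>s. s \<in> {-1..0} \<Longrightarrow> cmod (poly U (of_real s) - c * exp (lam * of_real s)) \<le> D"
  shows "cmod (coeff U m) \<le> 4 ^ m * (D + cmod c * exp R * (R + 1) ^ Suc m / fact m)"
proof -
  let ?V = "U - smult c (exp_taylor_poly lam m)"
  let ?\<tau> = "exp R * R ^ Suc m / fact m"
  have R: "0 \<le> R"
    using lam norm_ge_zero order_trans by blast
  have "cmod (poly ?V (of_real s)) \<le> D + cmod c * ?\<tau>" if s: "s \<in> {-1..0}" for s
  proof -
    let ?T = "\<Sum>k\<le>m. (lam * of_real s) ^ k / fact k"
    have eq: "poly ?V (of_real s) = (poly U (of_real s) - c * exp (lam * of_real s))
        + c * (exp (lam * of_real s) - ?T)"
      by (simp add: poly_exp_taylor_poly algebra_simps)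
    have "cmod (poly ?V (of_real s))
        \<le> cmod (poly U (of_real s) - c * exp (lam * of_real s)) + cmod (c * (exp (lam * of_real s) - ?T))"
      unfolding eq by (rule norm_triangle_ineq)
    also have "\<dots> \<le> D + cmod c * ?\<tau>"
      unfolding norm_mult using near[OF s] norm_exp_minus_taylor_le[OF norm_mult_of_real_le[OF lam s], of m]
      by (intro add_mono mult_left_mono) auto
    finally show ?thesis .
  qed
  then have V: "cmod (coeff ?V m) \<le> 4 ^ m * (D + cmod c * ?\<tau>)"
    using deg degree_exp_taylor_poly[of lam m]
    by (intro norm_coeff_le_Chebyshev degree_diff_le order_trans[OF degree_smult_le]) auto
  have "cmod (c * (lam ^ m / fact m)) \<le> cmod c * (R ^ m / fact m)"
    using lam by (auto simp: norm_mult norm_divide norm_power intro!: mult_left_mono divide_right_mono power_mono)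
  then have "cmod (coeff U m) \<le> cmod (coeff ?V m) + cmod c * (R ^ m / fact m)"
    using norm_triangle_ineq[of "coeff ?V m" "c * (lam ^ m / fact m)"]
    by (simp add: coeff_exp_taylor_poly_top)
  also have "\<dots> \<le> 4 ^ m * (D + cmod c * ?\<tau>) + (4 ^ m * exp R) * (cmod c * (R ^ m / fact m))"
  proof -
    have "(1::real) * 1 \<le> 4 ^ m * exp R"
      using R by (intro mult_mono) auto
    then have "cmod c * (R ^ m / fact m) \<le> (4 ^ m * exp R) * (cmod c * (R ^ m / fact m))"
      using R mult_right_mono[of 1 "4 ^ m * exp R" "cmod c * (R ^ m / fact m)"] by simp
    then show ?thesis
      using V by (intro add_mono) auto
  qed
  also have "\<dots> = 4 ^ m * (D + cmod c * exp R * (R ^ Suc m + R ^ m) / fact m)"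
    by (simp add: algebra_simps add_divide_distrib)
  also have "\<dots> \<le> 4 ^ m * (D + cmod c * exp R * (R + 1) ^ Suc m / fact m)"
  proof -
    have "R ^ m \<le> (R + 1) ^ m"
      using R by (simp add: power_mono)
    then have "(R + 1) * R ^ m \<le> (R + 1) * (R + 1) ^ m"
      using R by (simp add: mult_left_mono)
    then have "R ^ Suc m + R ^ m \<le> (R + 1) ^ Suc m"
      by (simp add: algebra_simps)
    then show ?thesis
      by (intro mult_left_mono add_left_mono divide_right_mono mult_left_mono) auto
  qed
  finally show ?thesis .
qed

section \<open>Interpolation at the reduced nodes\<close>

locale interpolation_nodes =
  fixes n :: nat and x :: "nat \<Rightarrow> real" and Lam :: real
  assumes n_ge_1: "n \<ge> 1"
    and inj_nodes: "inj_on x {1..n}"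
    and nodes_in_Icc: "\<And>j. j \<in> {1..n} \<Longrightarrow> x j \<in> {-1..0}"
    and lebesgue_le:
      "\<And>t. t \<in> {-1..0} \<Longrightarrow> (\<Sum>j\<in>{1..n}. \<bar>\<Prod>k\<in>{1..n}-{j}. (t - x k) / (x j - x k)\<bar>) \<le> Lam"
begin

definition interp :: "complex poly \<Rightarrow> complex poly" where
  "interp q = (\<Sum>j\<in>{1..n}. smult (poly q (of_real (x j))) (lagrange_basis {1..n} (\<lambda>k. of_real (x k)) j))"

lemma inj_on_complex_nodes: "inj_on (\<lambda>k. complex_of_real (x k)) {1..n}"
proof (rule inj_onI)
  fix a b assume "a \<in> {1..n}" "b \<in> {1..n}" "complex_of_real (x a) = complex_of_real (x b)"
  then show "a = b"
    using inj_onD[OF inj_nodes] by simp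
qed

lemma degree_interp: "degree (interp q) \<le> n - 1"
  unfolding interp_def
  by (intro degree_sum_le) (auto intro: order_trans[OF degree_smult_le] order_trans[OF degree_lagrange_basis])

lemma poly_interp_of_real:
  "poly (interp q) (of_real t) =
     (\<Sum>j\<in>{1..n}. poly q (of_real (x j)) * of_real (\<Prod>k\<in>{1..n}-{j}. (t - x k) / (x j - x k)))"
  by (simp add: interp_def poly_sum poly_lagrange_basis)

lemma poly_interp_node:
  assumes "i \<in> {1..n}"
  shows "poly (interp q) (of_real (x i)) = poly q (of_real (x i))"
proof -
  have "poly (interp q) (of_real (x i)) = (\<Sum>j\<in>{1..n}. poly q (of_real (x j)) * (if i = j then 1 else 0))"
    unfolding interp_def poly_sum
    using poly_lagrange_basis_node[OF finite_atLeastAtMost inj_on_complex_nodes assms]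
    by (intro sum.cong refl) simp
  also have "\<dots> = poly q (of_real (x i))"
    using assms by (simp add: if_distrib cong: if_cong)
  finally show ?thesis .
qed

lemma interp_eq_self: "degree r < n \<Longrightarrow> interp r = r"
  unfolding interp_def using inj_on_complex_nodes
  by (subst (2) lagrange_interpolation[of "{1..n}" "\<lambda>k. of_real (x k)" r]) auto

lemma interp_diff: "interp (q - r) = interp q - interp r"
  by (simp add: interp_def smult_diff_left sum_subtractf)

lemma norm_poly_interp_le:
  assumes t: "t \<in> {-1..0}" and B: "\<And>j. j \<in> {1..n} \<Longrightarrow> cmod (poly q (of_real (x j))) \<le> B"
  shows "cmod (poly (interp q) (of_real t)) \<le> Lam * B"
proof -
  have "cmod (poly q (of_real (x 1))) \<le> B"
    using B n_ge_1 by simp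
  then have "0 \<le> B"
    using norm_ge_zero order_trans by blast
  have "cmod (poly (interp q) (of_real t))
      \<le> (\<Sum>j\<in>{1..n}. cmod (poly q (of_real (x j))) * \<bar>\<Prod>k\<in>{1..n}-{j}. (t - x k) / (x j - x k)\<bar>)"
    unfolding poly_interp_of_real
    by (rule order_trans[OF norm_sum]) (simp add: norm_mult del: of_real_prod of_real_divide)
  also have "\<dots> \<le> (\<Sum>j\<in>{1..n}. B * \<bar>\<Prod>k\<in>{1..n}-{j}. (t - x k) / (x j - x k)\<bar>)"
    using B by (intro sum_mono mult_right_mono) auto
  also have "\<dots> = B * (\<Sum>j\<in>{1..n}. \<bar>\<Prod>k\<in>{1..n}-{j}. (t - x k) / (x j - x k)\<bar>)"
    by (simp add: sum_distrib_left)
  also have "\<dots> \<le> B * Lam"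
    using lebesgue_le[OF t] \<open>0 \<le> B\<close> by (rule mult_left_mono)
  finally show ?thesis
    by (simp add: mult.commute)
qed

lemma norm_interp_error_le:
  assumes t: "t \<in> {-1..0}" and r: "degree r < n"
    and B: "\<And>s. s \<in> {-1..0} \<Longrightarrow> cmod (poly q (of_real s) - poly r (of_real s)) \<le> B"
  shows "cmod (poly (interp q) (of_real t) - poly q (of_real t)) \<le> (1 + Lam) * B"
proof -
  have "poly (interp q) (of_real t) - poly q (of_real t)
      = poly (interp (q - r)) (of_real t) - (poly q (of_real t) - poly r (of_real t))"
    by (simp add: interp_diff interp_eq_self[OF r])
  also have "cmod \<dots> \<le> cmod (poly (interp (q - r)) (of_real t)) + cmod (poly q (of_real t) - poly r (of_real t))"
    by (rule norm_triangle_ineq4)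
  also have "\<dots> \<le> Lam * B + B"
    using norm_poly_interp_le[OF t, of "q - r" B] B[OF t] B[OF nodes_in_Icc]
    by (intro add_mono) auto
  finally show ?thesis
    by (simp add: algebra_simps)
qed

lemma norm_interp_error_le_coeff:
  assumes t: "t \<in> {-1..0}" and q: "degree q \<le> n"
  shows "cmod (poly (interp q) (of_real t) - poly q (of_real t))
      \<le> (1 + Lam) * (cmod (coeff q n) / 2 ^ (2 * n - 1))"
proof -
  obtain M where M: "degree M = n" "coeff M n = 1"
    and small: "\<And>s. s \<in> {-1..0} \<Longrightarrow> cmod (poly M (of_real s)) \<le> 1 / 2 ^ (2 * n - 1)"
    using monic_poly_small_on_Icc[OF n_ge_1] by blast
  let ?r = "q - smult (coeff q n) M"
  have "degree ?r \<le> n" "coeff ?r n = 0"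
    using q M degree_smult_le[of "coeff q n" M] by (auto intro: degree_diff_le)
  then have "degree ?r < n"
    using n_ge_1 leading_coeff_0_iff[of ?r] by (cases "degree ?r = n") auto
  then show ?thesis
  proof (rule norm_interp_error_le[OF t])
    fix s :: real assume "s \<in> {-1..0}"
    then show "cmod (poly q (of_real s) - poly ?r (of_real s)) \<le> cmod (coeff q n) / 2 ^ (2 * n - 1)"
      using mult_left_mono[OF small[of s], of "cmod (coeff q n)"] by (simp add: norm_mult)
  qed
qed

lemma pderiv_eq_smult_interp:
  assumes deg: "degree q \<le> n"
    and colloc: "\<And>i. i \<in> {1..n} \<Longrightarrow> poly (pderiv q) (of_real (x i)) = lam * poly q (of_real (x i))"
  shows "pderiv q = smult lam (interp q)"
proof (rule poly_eqI_degree[where A = "(\<lambda>j. complex_of_real (x j)) ` {1..n}"])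
  have card: "card ((\<lambda>j. complex_of_real (x j)) ` {1..n}) = n"
    using card_image[OF inj_on_complex_nodes] by simp
  show "degree (pderiv q) < card ((\<lambda>j. complex_of_real (x j)) ` {1..n})"
    unfolding card degree_pderiv using deg n_ge_1 by linarith
  show "degree (smult lam (interp q)) < card ((\<lambda>j. complex_of_real (x j)) ` {1..n})"
    unfolding card using degree_interp[of q] n_ge_1 degree_smult_le[of lam "interp q"] by linarith
  fix z assume "z \<in> (\<lambda>j. complex_of_real (x j)) ` {1..n}"
  then obtain i where "i \<in> {1..n}" "z = of_real (x i)"
    by auto
  then show "poly (pderiv q) z = poly (smult lam (interp q)) z"
    by (simp add: colloc poly_interp_node)
qed

text \<open>The error \<open>E = q - q(0) e\<^sup>\<lambda>\<^sup>t\<close> solves \<open>E' = \<lambda> E + \<lambda> (interp q - q)\<close>.\<close>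

lemma collocation_error_le_interp_error:
  assumes deg: "degree q \<le> n"
    and colloc: "\<And>i. i \<in> {1..n} \<Longrightarrow> poly (pderiv q) (of_real (x i)) = lam * poly q (of_real (x i))"
    and lam: "cmod lam \<le> R"
    and delta: "\<And>s. s \<in> {-1..0} \<Longrightarrow> cmod (poly (interp q) (of_real s) - poly q (of_real s)) \<le> \<delta>"
    and t: "t \<in> {-1..0}"
  shows "cmod (poly q (of_real t) - poly q 0 * exp (lam * of_real t)) \<le> exp (2 * R) * (R * \<delta>)"
proof (rule norm_linear_ode_solution_le[OF _ _ lam _ t])
  let ?c = "poly q 0"
  have eq: "pderiv q = smult lam (interp q)"
    using deg colloc by (rule pderiv_eq_smult_interp)
  fix s :: real
  have "((\<lambda>z. poly q z - ?c * exp (lam * z)) has_field_derivative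
          poly (pderiv q) (of_real s) - ?c * (exp (lam * of_real s) * lam)) (at (of_real s))"
    by (auto intro!: derivative_eq_intros poly_DERIV)
  then have "((\<lambda>s. poly q (of_real s) - ?c * exp (lam * of_real s)) has_vector_derivative
          poly (pderiv q) (of_real s) - ?c * (exp (lam * of_real s) * lam)) (at s)"
    by (rule has_vector_derivative_real_field)
  moreover have "poly (pderiv q) (of_real s) - ?c * (exp (lam * of_real s) * lam)
      = lam * (poly q (of_real s) - ?c * exp (lam * of_real s))
        + lam * (poly (interp q) (of_real s) - poly q (of_real s))"
    by (simp add: eq algebra_simps)
  ultimately show "((\<lambda>s. poly q (of_real s) - ?c * exp (lam * of_real s)) has_vector_derivative
      lam * (poly q (of_real s) - ?c * exp (lam * of_real s))
      + lam * (poly (interp q) (of_real s) - poly q (of_real s))) (at s)"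
    by simp
  assume "s \<in> {-1..0}"
  then show "cmod (lam * (poly (interp q) (of_real s) - poly q (of_real s))) \<le> R * \<delta>"
    using delta lam by (simp add: norm_mult mult_mono')
qed simp

text \<open>From \<open>n a = \<lambda> \<cdot> coeff (interp q) (n - 1)\<close> the leading coefficient \<open>a\<close> of \<open>q\<close> is bounded
  in terms of itself; \<open>small\<close> makes the self-referential part at most one half.\<close>

lemma collocation_top_coeff_le:
  assumes deg: "degree q \<le> n"
    and colloc: "\<And>i. i \<in> {1..n} \<Longrightarrow> poly (pderiv q) (of_real (x i)) = lam * poly q (of_real (x i))"
    and lam: "cmod lam \<le> R"
    and small: "R * (1 + R * exp (2 * R)) * (1 + Lam) \<le> n"
  shows "cmod (coeff q n) / 2 ^ (2 * n - 1) \<le> R * cmod (poly q 0) * exp R * (R + 1) ^ n / fact n"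
proof -
  define X where "X = cmod (coeff q n) / 2 ^ (2 * n - 1)"
  define K where "K = 1 + R * exp (2 * R)"
  define W where "W = cmod (poly q 0) * exp R * (R + 1) ^ n / fact (n - 1)"
  have R: "0 \<le> R"
    using lam norm_ge_zero order_trans by blast
  have pderiv_q: "pderiv q = smult lam (interp q)"
    using deg colloc by (rule pderiv_eq_smult_interp)
  have X: "0 \<le> X" and W: "0 \<le> W"
    using R by (simp_all add: X_def W_def)
  have delta: "cmod (poly (interp q) (of_real s) - poly q (of_real s)) \<le> (1 + Lam) * X"
    if "s \<in> {-1..0}" for s
    unfolding X_def using that deg by (rule norm_interp_error_le_coeff)
  have near: "cmod (poly (interp q) (of_real s) - poly q 0 * exp (lam * of_real s)) \<le> K * ((1 + Lam) * X)"
    if s: "s \<in> {-1..0}" for s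
  proof -
    have "cmod (poly (interp q) (of_real s) - poly q 0 * exp (lam * of_real s))
        \<le> cmod (poly (interp q) (of_real s) - poly q (of_real s))
          + cmod (poly q (of_real s) - poly q 0 * exp (lam * of_real s))"
      using norm_triangle_ineq[of "poly (interp q) (of_real s) - poly q (of_real s)"
          "poly q (of_real s) - poly q 0 * exp (lam * of_real s)"] by simp
    also have "\<dots> \<le> (1 + Lam) * X + exp (2 * R) * (R * ((1 + Lam) * X))"
      using delta collocation_error_le_interp_error[OF deg colloc lam delta s]
      by (intro add_mono) (use s in auto)
    finally show ?thesis
      by (simp add: K_def algebra_simps)
  qed
  have "real n * cmod (coeff q n) = cmod (coeff (pderiv q) (n - 1))"
    using n_ge_1 by (simp add: coeff_pderiv norm_mult)
  also have "\<dots> \<le> R * cmod (coeff (interp q) (n - 1))"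
    using lam by (simp add: pderiv_q norm_mult mult_right_mono)
  also have "\<dots> \<le> R * (4 ^ (n - 1) * (K * ((1 + Lam) * X) + cmod (poly q 0) * exp R * (R + 1) ^ Suc (n - 1) / fact (n - 1)))"
    using norm_coeff_le_near_exp[OF degree_interp lam near] R by (intro mult_left_mono) auto
  finally have "real n * X \<le> R * (K * (1 + Lam) * X + W) / 2"
    using n_ge_1 power_two_double_minus_one[OF n_ge_1] by (simp add: X_def W_def divide_simps mult_ac)
  also have "\<dots> = (R * K * (1 + Lam) * X + R * W) / 2"
    by (simp add: algebra_simps)
  also have "\<dots> \<le> (real n * X + R * W) / 2"
    using mult_right_mono[OF small X] by (simp add: K_def)
  finally have "real n * X \<le> R * W"
    by (simp add: mult.commute)
  then have "X \<le> R * W / real n"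
    using n_ge_1 by (simp add: field_simps)
  also have "\<dots> = R * cmod (poly q 0) * exp R * (R + 1) ^ n / fact n"
    using n_ge_1 fact_reduce[of n, where 'a = real] by (simp add: W_def mult_ac)
  finally show ?thesis
    unfolding X_def .
qed

lemma Lam_nonneg: "0 \<le> Lam"
proof -
  have "0 \<le> (\<Sum>j\<in>{1..n}. \<bar>\<Prod>k\<in>{1..n}-{j}. (0 - x k) / (x j - x k)\<bar>)"
    by (rule sum_nonneg) simp
  also have "\<dots> \<le> Lam"
    by (rule lebesgue_le) simp
  finally show ?thesis .
qed

lemma collocation_error_le:
  assumes deg: "degree q \<le> n"
    and colloc: "\<And>i. i \<in> {1..n} \<Longrightarrow> poly (pderiv q) (of_real (x i)) = lam * poly q (of_real (x i))"
    and lam: "cmod lam \<le> R"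
    and small: "R * (1 + R * exp (2 * R)) * (1 + Lam) \<le> n"
    and t: "t \<in> {-1..0}"
  shows "cmod (poly q (of_real t) - poly q 0 * exp (lam * of_real t))
      \<le> R\<^sup>2 * exp (3 * R) * (1 + Lam) * cmod (poly q 0) * (R + 1) ^ n / fact n"
proof -
  have R: "0 \<le> R"
    using lam norm_ge_zero order_trans by blast
  have "cmod (poly q (of_real t) - poly q 0 * exp (lam * of_real t))
      \<le> exp (2 * R) * (R * ((1 + Lam) * (cmod (coeff q n) / 2 ^ (2 * n - 1))))"
    using deg colloc lam norm_interp_error_le_coeff[OF _ deg] t
    by (rule collocation_error_le_interp_error)
  also have "\<dots> \<le> exp (2 * R) * (R * ((1 + Lam) * (R * cmod (poly q 0) * exp R * (R + 1) ^ n / fact n)))"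
    using collocation_top_coeff_le[OF deg colloc lam small] R Lam_nonneg
    by (intro mult_left_mono) auto
  also have "\<dots> = R\<^sup>2 * exp (3 * R) * (1 + Lam) * cmod (poly q 0) * (R + 1) ^ n / fact n"
    by (simp add: power2_eq_square mult_ac flip: exp_add)
  finally show ?thesis .
qed

end

section \<open>Collocation on a mesh\<close>

lemma mesh_less:
  assumes "is_mesh_family th" "i < j" "j \<le> n"
  shows "th n j < th n i"
  using assms(2,3)
proof (induction j)
  case (Suc j)
  have "th n (Suc j) < th n j"
    using assms(1) Suc.prems unfolding is_mesh_family_def by auto
  then show ?case
    using Suc by (cases "i = j") auto
qed simp

lemma inj_on_mesh:
  assumes "is_mesh_family th"
  shows "inj_on (th n) {0..n}"
proof (rule inj_onI)
  fix a b assume "a \<in> {0..n}" "b \<in> {0..n}" "th n a = th n b"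
  then show "a = b"
    using mesh_less[OF assms, of a b n] mesh_less[OF assms, of b a n] by (cases a b rule: linorder_cases) auto
qed

lemma mesh_in_Icc:
  assumes "is_mesh_family th" "j \<le> n"
  shows "th n j \<in> {-1..0}"
proof -
  have "th n 0 = 0" "-1 \<le> th n n"
    using assms(1) unfolding is_mesh_family_def by auto
  moreover have "th n j \<le> th n 0" "th n n \<le> th n j"
    using mesh_less[OF assms(1), of 0 j n] mesh_less[OF assms(1), of j n n] assms(2)
    by (cases "j = 0"; cases "j = n"; auto)+
  ultimately show ?thesis
    by simp
qed

lemma mesh_interpolation_nodes:
  assumes mesh: "is_mesh_family th" and n: "n \<ge> 1"
  shows "interpolation_nodes n (th n) (rlebesgue th n)"
proof
  show "inj_on (th n) {1..n}"
    using inj_on_mesh[OF mesh, of n] by (rule inj_on_subset) auto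
  show "th n j \<in> {-1..0}" if "j \<in> {1..n}" for j
    using mesh_in_Icc[OF mesh] that by simp
  fix t :: real assume t: "t \<in> {-1..0}"
  define g where "g t = (\<Sum>j\<in>{1..n}. \<bar>rlagr th n j t\<bar>)" for t
  have "th n j - th n k \<noteq> 0" if "j \<in> {1..n}" "k \<in> {1..n}" "j \<noteq> k" for j k
    using inj_onD[OF inj_on_mesh[OF mesh, of n], of j k] that by auto
  then have "continuous_on {-1..0} g"
    unfolding g_def rlagr_def by (intro continuous_intros) auto
  then have "bdd_above (g ` {-1..0})"
    by (intro bounded_imp_bdd_above compact_imp_bounded compact_continuous_image) auto
  then have "g t \<le> rlebesgue th n"
    unfolding rlebesgue_def g_def[symmetric] using t by (rule cSUP_upper2) simp
  then show "(\<Sum>j\<in>{1..n}. \<bar>\<Prod>k\<in>{1..n}-{j}. (t - th n k) / (th n j - th n k)\<bar>) \<le> rlebesgue th n"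
    by (simp add: g_def rlagr_def)
qed (rule n)

lemma lagr_eq_poly: "lagr th n j = poly (lagrange_basis {0..n} (th n) j)"
  by (simp add: lagr_def poly_lagrange_basis fun_eq_iff)

lemma Dmat_eq_poly_pderiv:
  "Dmat th n i j = of_real (poly (pderiv (lagrange_basis {0..n} (th n) j)) (th n i))"
  by (simp add: Dmat_def lagr_eq_poly DERIV_imp_deriv[OF poly_DERIV])

lemma sum_lagrange_basis_mesh:
  assumes "is_mesh_family th"
  shows "(\<Sum>j\<in>{0..n}. lagrange_basis {0..n} (th n) j) = 1"
  using lagrange_interpolation[of "{0..n}" "th n" 1] inj_on_mesh[OF assms] by simp

lemma sum_pderiv_lagrange_basis_mesh:
  assumes "is_mesh_family th"
  shows "(\<Sum>j\<in>{0..n}. pderiv (lagrange_basis {0..n} (th n) j)) = 0"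
  using higher_pderiv_sum[of 1 "lagrange_basis {0..n} (th n)" "{0..n}"] sum_lagrange_basis_mesh[OF assms]
  by simp

text \<open>\<open>c \<ell>\<^sub>0 + P y\<close> is \<open>nodal_poly th n (y(0 := c))\<close>.\<close>

definition nodal_poly :: "(nat \<Rightarrow> nat \<Rightarrow> real) \<Rightarrow> nat \<Rightarrow> (nat \<Rightarrow> complex) \<Rightarrow> complex poly" where
  "nodal_poly th n v = (\<Sum>j\<in>{0..n}. smult (v j) (map_poly of_real (lagrange_basis {0..n} (th n) j)))"

lemma degree_nodal_poly: "degree (nodal_poly th n v) \<le> n"
  unfolding nodal_poly_def
  by (intro degree_sum_le)
    (auto intro!: order_trans[OF degree_smult_le] order_trans[OF degree_lagrange_basis]
      simp: degree_map_poly)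

lemma poly_nodal_poly:
  "poly (nodal_poly th n v) (of_real t) = (\<Sum>j\<in>{0..n}. v j * of_real (lagr th n j t))"
  by (simp add: nodal_poly_def poly_sum poly_map_poly_of_real lagr_eq_poly)

lemma poly_nodal_poly_node:
  assumes "is_mesh_family th" "i \<le> n"
  shows "poly (nodal_poly th n v) (of_real (th n i)) = v i"
proof -
  have "poly (nodal_poly th n v) (of_real (th n i)) = (\<Sum>j\<in>{0..n}. v j * (if i = j then 1 else 0))"
    unfolding poly_nodal_poly lagr_eq_poly
    using poly_lagrange_basis_node[OF finite_atLeastAtMost inj_on_mesh[OF assms(1)]] assms(2)
    by (intro sum.cong refl) simp
  then show ?thesis
    using assms(2) by (simp add: if_distrib cong: if_cong)
qed

text \<open>The \<open>\<ell>\<^sub>j\<close> sum to \<open>1\<close>, so their derivatives sum to \<open>0\<close>; this eliminates \<open>\<ell>\<^sub>0'\<close>.\<close>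

lemma poly_pderiv_nodal_poly_node:
  assumes "is_mesh_family th"
  shows "poly (pderiv (nodal_poly th n v)) (of_real (th n i)) = (\<Sum>j\<in>{1..n}. Dmat th n i j * (v j - v 0))"
proof -
  let ?d = "\<lambda>j. complex_of_real (poly (pderiv (lagrange_basis {0..n} (th n) j)) (th n i))"
  have "poly (pderiv (nodal_poly th n v)) (of_real (th n i)) = (\<Sum>j\<in>{0..n}. ?d j * v j)"
    by (simp add: nodal_poly_def higher_pderiv_sum[of 1, simplified] pderiv_smult poly_sum
        poly_map_poly_of_real pderiv_map_poly_of_real mult.commute)
  also have "\<dots> = (\<Sum>j\<in>{0..n}. ?d j * (v j - v 0))"
  proof -
    have "(\<Sum>j\<in>{0..n}. ?d j) = of_real (poly (\<Sum>j\<in>{0..n}. pderiv (lagrange_basis {0..n} (th n) j)) (th n i))"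
      by (simp add: poly_sum)
    then have "(\<Sum>j\<in>{0..n}. ?d j) = 0"
      by (simp add: sum_pderiv_lagrange_basis_mesh[OF assms])
    then show ?thesis
      by (simp add: right_diff_distrib sum_subtractf flip: sum_distrib_right)
  qed
  also have "\<dots> = (\<Sum>j\<in>{1..n}. Dmat th n i j * (v j - v 0))"
    by (simp add: sum.atLeast_Suc_atMost Dmat_eq_poly_pderiv)
  finally show ?thesis .
qed

lemma sum_DmI_mult:
  assumes "i \<in> {1..n}"
  shows "(\<Sum>j\<in>{1..n}. DmI th n lam i j * y j) = (\<Sum>j\<in>{1..n}. Dmat th n i j * y j) - lam * y i"
proof -
  have "(\<Sum>j\<in>{1..n}. DmI th n lam i j * y j)
      = (\<Sum>j\<in>{1..n}. Dmat th n i j * y j) - (\<Sum>j\<in>{1..n}. if i = j then lam * y j else 0)"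
    unfolding DmI_def sum_subtractf[symmetric] by (intro sum.cong refl) (simp add: algebra_simps)
  then show ?thesis
    using assms by simp
qed

lemma nodal_poly_collocation:
  assumes mesh: "is_mesh_family th" and i: "i \<in> {1..n}"
    and sys: "(\<Sum>j\<in>{1..n}. DmI th n lam i j * y j) = c * (\<Sum>j\<in>{1..n}. Dmat th n i j)"
  shows "poly (pderiv (nodal_poly th n (y(0 := c)))) (of_real (th n i))
      = lam * poly (nodal_poly th n (y(0 := c))) (of_real (th n i))"
proof -
  have "poly (pderiv (nodal_poly th n (y(0 := c)))) (of_real (th n i))
      = (\<Sum>j\<in>{1..n}. Dmat th n i j * y j) - c * (\<Sum>j\<in>{1..n}. Dmat th n i j)"
    unfolding poly_pderiv_nodal_poly_node[OF mesh] sum_distrib_left sum_subtractf[symmetric]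
    by (intro sum.cong refl) (simp add: algebra_simps)
  also have "\<dots> = lam * y i"
    using sys sum_DmI_mult[OF i] by (simp add: diff_eq_eq add.commute)
  also have "y i = poly (nodal_poly th n (y(0 := c))) (of_real (th n i))"
    using i by (simp add: poly_nodal_poly_node[OF mesh])
  finally show ?thesis .
qed

lemma nodal_poly_error_le:
  assumes mesh: "is_mesh_family th" and n: "n \<ge> 1" and lam: "cmod lam \<le> R"
    and small: "R * (1 + R * exp (2 * R)) * (1 + rlebesgue th n) \<le> n"
    and sys: "\<And>i. i \<in> {1..n} \<Longrightarrow>
      (\<Sum>j\<in>{1..n}. DmI th n lam i j * y j) = c * (\<Sum>j\<in>{1..n}. Dmat th n i j)"
    and t: "t \<in> {-1..0}"
  shows "cmod (poly (nodal_poly th n (y(0 := c))) (of_real t) - c * exp (lam * of_real t))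
      \<le> R\<^sup>2 * exp (3 * R) * (1 + rlebesgue th n) * (R + 1) ^ n / fact n * cmod c"
proof -
  interpret interpolation_nodes n "th n" "rlebesgue th n"
    using mesh n by (rule mesh_interpolation_nodes)
  have "poly (nodal_poly th n (y(0 := c))) 0 = c"
    using poly_nodal_poly_node[OF mesh, of 0 n "y(0 := c)"] mesh by (simp add: is_mesh_family_def)
  then show ?thesis
    using collocation_error_le[OF degree_nodal_poly nodal_poly_collocation[OF mesh _ sys] lam small t]
    by (simp add: mult_ac)
qed

section \<open>Invertibility of matrices\<close>

lemma invertible_nmat_if_det_ne_0:
  assumes "det (Matrix.mat n n (\<lambda>(i, j). A (Suc i) (Suc j))) \<noteq> 0"
  shows "invertible_nmat n A"
proof -
  let ?A = "Matrix.mat n n (\<lambda>(i, j). A (Suc i) (Suc j))"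
  have "?A \<in> Units (ring_mat TYPE(complex) n ())"
    using assms by (intro det_non_zero_imp_unit) auto
  then obtain B where B: "B \<in> carrier_mat n n" "B * ?A = 1\<^sub>m n" "?A * B = 1\<^sub>m n"
    unfolding Units_def ring_mat_def by auto
  have "is_inverse n A (\<lambda>i k. B $$ (i - 1, k - 1))"
    unfolding is_inverse_def
  proof (intro ballI conjI)
    fix i k assume ik: "i \<in> {1..n}" "k \<in> {1..n}"
    then have idx: "i - 1 < n" "k - 1 < n" "Suc (i - 1) = i" "Suc (k - 1) = k"
      by auto
    have "(\<Sum>j\<in>{1..n}. A i j * B $$ (j - 1, k - 1)) = (?A * B) $$ (i - 1, k - 1)"
      using B(1) idx by (simp add: sum.atLeast1_atMost_eq scalar_prod_def atLeast0LessThan)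
    then show "(\<Sum>j\<in>{1..n}. A i j * B $$ (j - 1, k - 1)) = (if i = k then 1 else 0)"
      using B(3) ik by auto
    have "(\<Sum>j\<in>{1..n}. B $$ (i - 1, j - 1) * A j k) = (B * ?A) $$ (i - 1, k - 1)"
      using B(1) idx by (simp add: sum.atLeast1_atMost_eq scalar_prod_def atLeast0LessThan)
    then show "(\<Sum>j\<in>{1..n}. B $$ (i - 1, j - 1) * A j k) = (if i = k then 1 else 0)"
      using B(2) ik by auto
  qed
  then show ?thesis
    unfolding invertible_nmat_def by blast
qed

lemma invertible_nmat_if_injective:
  fixes A :: "nat \<Rightarrow> nat \<Rightarrow> complex"
  assumes inj: "\<And>y j. (\<And>i. i \<in> {1..n} \<Longrightarrow> (\<Sum>j\<in>{1..n}. A i j * y j) = 0) \<Longrightarrow> j \<in> {1..n} \<Longrightarrow> y j = 0"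
  shows "invertible_nmat n A"
proof (rule invertible_nmat_if_det_ne_0, rule notI)
  let ?A = "Matrix.mat n n (\<lambda>(i, j). A (Suc i) (Suc j))"
  assume "det ?A = 0"
  moreover have "?A \<in> carrier_mat n n"
    by simp
  ultimately obtain v where v: "v \<in> carrier_vec n" "v \<noteq> 0\<^sub>v n" "?A *\<^sub>v v = 0\<^sub>v n"
    using det_0_iff_vec_prod_zero_field by blast
  define y where "y j = (if j \<in> {1..n} then v $ (j - 1) else 0)" for j
  have kernel: "(\<Sum>j\<in>{1..n}. A i j * y j) = 0" if i: "i \<in> {1..n}" for i
  proof -
    have "i - 1 < n" "Suc (i - 1) = i"
      using i by auto
    then have "(\<Sum>j\<in>{1..n}. A i j * y j) = (?A *\<^sub>v v) $ (i - 1)"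
      using v(1) by (simp add: y_def sum.atLeast1_atMost_eq mult_mat_vec_def scalar_prod_def atLeast0LessThan)
    then show ?thesis
      using v(3) i by auto
  qed
  have y0: "y j = 0" if "j \<in> {1..n}" for j
    by (rule inj[OF kernel that])
  have "v = 0\<^sub>v n"
  proof (rule eq_vecI)
    fix j assume "j < dim_vec (0\<^sub>v n :: complex vec)"
    then have "j < n"
      by simp
    with y0[of "Suc j"] show "v $ j = 0\<^sub>v n $ j"
      by (simp add: y_def)
  qed (use v(1) in simp)
  with v(2) show False ..
qed

lemma invertible_DmI:
  assumes mesh: "is_mesh_family th" and n: "n \<ge> 1" and lam: "cmod lam \<le> R"
    and small: "R * (1 + R * exp (2 * R)) * (1 + rlebesgue th n) \<le> n"
  shows "invertible_nmat n (DmI th n lam)"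
proof (rule invertible_nmat_if_injective)
  fix y :: "nat \<Rightarrow> complex" and j
  assume "\<And>i. i \<in> {1..n} \<Longrightarrow> (\<Sum>j\<in>{1..n}. DmI th n lam i j * y j) = 0" and j: "j \<in> {1..n}"
  then have "cmod (poly (nodal_poly th n (y(0 := 0))) (of_real (th n j)) - 0 * exp (lam * of_real (th n j))) \<le> 0"
    using nodal_poly_error_le[OF mesh n lam small, of y 0] mesh_in_Icc[OF mesh, of j n] by simp
  then show "y j = 0"
    using j by (simp add: poly_nodal_poly_node[OF mesh])
qed

lemma is_inverse_solves:
  assumes E: "is_inverse n A E" and i: "i \<in> {1..n}"
  shows "(\<Sum>j\<in>{1..n}. A i j * (\<Sum>k\<in>{1..n}. E j k * b k)) = b i"
proof -
  have "(\<Sum>j\<in>{1..n}. A i j * (\<Sum>k\<in>{1..n}. E j k * b k)) = (\<Sum>k\<in>{1..n}. (\<Sum>j\<in>{1..n}. A i j * E j k) * b k)"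
    by (simp add: sum_distrib_left sum_distrib_right mult.assoc) (rule sum.swap)
  also have "\<dots> = (\<Sum>k\<in>{1..n}. if i = k then b k else 0)"
    using E i unfolding is_inverse_def by (intro sum.cong refl) auto
  finally show ?thesis
    using i by simp
qed

lemma err_fun_eq_nodal_poly:
  "err_fun th n lam y t = poly (nodal_poly th n (y(0 := 1))) (of_real t) - exp (lam * of_real t)"
  by (simp add: err_fun_def poly_nodal_poly sum.atLeast_Suc_atMost)

lemma supnorm_err_fun_le:
  assumes mesh: "is_mesh_family th" and n: "n \<ge> 1" and lam: "cmod lam \<le> R"
    and small: "R * (1 + R * exp (2 * R)) * (1 + rlebesgue th n) \<le> n"
    and E: "is_inverse n (DmI th n lam) E"
  shows "supnorm (err_fun th n lam (yvec th n E))
      \<le> R\<^sup>2 * exp (3 * R) * (1 + rlebesgue th n) * (R + 1) ^ n / fact n"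
  unfolding supnorm_def
proof (rule cSUP_least)
  fix t :: real assume t: "t \<in> {-1..0}"
  have "(\<Sum>j\<in>{1..n}. DmI th n lam i j * yvec th n E j) = 1 * (\<Sum>j\<in>{1..n}. Dmat th n i j)"
    if "i \<in> {1..n}" for i
    using is_inverse_solves[OF E that] by (simp add: yvec_def)
  from nodal_poly_error_le[OF mesh n lam small this t]
  show "cmod (err_fun th n lam (yvec th n E) t)
      \<le> R\<^sup>2 * exp (3 * R) * (1 + rlebesgue th n) * (R + 1) ^ n / fact n"
    by (simp add: err_fun_eq_nodal_poly)
qed simp

section \<open>Asymptotics\<close>

lemma power_le_fact_mult_exp: "real n ^ n \<le> fact n * exp (real n)"
proof -
  have exp: "(\<lambda>k. real n ^ k /\<^sub>R fact k) sums exp (real n)"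
    by (rule exp_converges)
  then have "sum (\<lambda>k. real n ^ k /\<^sub>R fact k) {n} \<le> suminf (\<lambda>k. real n ^ k /\<^sub>R fact k)"
    by (intro sum_le_suminf) (auto simp: sums_iff)
  then have "real n ^ n / fact n \<le> exp (real n)"
    using exp by (simp add: sums_iff divide_inverse mult.commute)
  then show ?thesis
    by (simp add: divide_le_eq mult.commute)
qed

lemma one_plus_le_two_power: "real n + 1 \<le> 2 ^ n"
proof -
  have "Suc n \<le> 2 ^ n"
    using less_exp[of n] by (simp only: Suc_le_eq)
  then show ?thesis
    by (metis of_nat_Suc of_nat_le_iff of_nat_numeral of_nat_power add.commute)
qed

lemma sqrt_le_two_power: "sqrt (real n) \<le> 2 ^ n"
proof -
  have "sqrt (real n) \<le> real n + 1"
  proof (cases "n = 0")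
    case False
    then have "real n \<le> real n ^ 2"
      by (simp add: power2_eq_square)
    then show ?thesis
      using real_sqrt_le_mono[of "real n" "real n ^ 2"] by simp
  qed simp
  then show ?thesis
    using one_plus_le_two_power[of n] by linarith
qed

lemma factorial_decay_le:
  fixes K L R :: real
  assumes n: "n \<ge> 1" and K: "0 \<le> K" and R: "0 \<le> R" and L: "0 \<le> L" "L \<le> real n"
  shows "K * (1 + L) * (R + 1) ^ n / fact n
    \<le> 1 / sqrt (real n) * (4 * exp 1 * (R + 1) * (K + 1) / real n) ^ n"
proof -
  define A where "A = K * (1 + L) * sqrt (real n)"
  have A: "0 \<le> A"
    using K L by (simp add: A_def)
  have "K \<le> (K + 1) ^ n"
    using K n self_le_power[of "K + 1" n] by simp
  moreover have "(1 + L) * sqrt (real n) \<le> 2 ^ n * 2 ^ n"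
    using L one_plus_le_two_power[of n] sqrt_le_two_power[of n] by (intro mult_mono) auto
  ultimately have "A \<le> (K + 1) ^ n * (2 ^ n * 2 ^ n)"
    unfolding A_def mult.assoc using K L by (simp add: mult_mono)
  then have "A * ((R + 1) ^ n * exp (real n)) \<le> (K + 1) ^ n * (2 ^ n * 2 ^ n) * ((R + 1) ^ n * exp (real n))"
    using R by (intro mult_right_mono) auto
  also have "\<dots> = (K + 1) ^ n * 4 ^ n * (R + 1) ^ n * exp 1 ^ n"
    using exp_of_nat_mult[of n "1::real"] by (simp add: mult_ac flip: power_mult_distrib)
  also have "\<dots> = (4 * exp 1 * (R + 1) * (K + 1)) ^ n"
    by (simp only: power_mult_distrib mult_ac)
  finally have bound: "A * ((R + 1) ^ n * exp (real n)) \<le> (4 * exp 1 * (R + 1) * (K + 1)) ^ n" .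
  have "real n ^ n / fact n \<le> exp (real n)"
    using power_le_fact_mult_exp[of n] by (simp add: divide_le_eq mult.commute)
  then have "A * ((R + 1) ^ n * (real n ^ n / fact n)) \<le> A * ((R + 1) ^ n * exp (real n))"
    using A R by (intro mult_left_mono) auto
  also have "A * ((R + 1) ^ n * (real n ^ n / fact n))
      = K * (1 + L) * (R + 1) ^ n / fact n * (sqrt (real n) * real n ^ n)"
    by (simp add: A_def)
  finally have "K * (1 + L) * (R + 1) ^ n / fact n
      \<le> (4 * exp 1 * (R + 1) * (K + 1)) ^ n / (sqrt (real n) * real n ^ n)"
    using bound n by (simp add: le_divide_eq)
  then show ?thesis
    by (simp add: power_divide)
qed

lemma eventually_mult_one_plus_le:
  fixes f :: "nat \<Rightarrow> real"
  assumes lim: "(\<lambda>n. f n / real n) \<longlonglongrightarrow> 0" and K: "0 \<le> K"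
  shows "eventually (\<lambda>n. K * (1 + f n) \<le> real n) sequentially"
proof -
  define e where "e = 1 / (2 * K + 2)"
  have e: "0 < e" "K * e \<le> 1 / 2"
    using K by (auto simp: e_def field_simps)
  have "eventually (\<lambda>n. f n / real n < e \<and> n \<ge> nat \<lceil>2 * K + 2\<rceil>) sequentially"
    using order_tendstoD(2)[OF lim e(1)] eventually_ge_at_top by (rule eventually_conj)
  then show ?thesis
  proof (rule eventually_mono)
    fix n assume n: "f n / real n < e \<and> n \<ge> nat \<lceil>2 * K + 2\<rceil>"
    then have "2 * K + 2 \<le> real n"
      by linarith
    moreover from this n have "f n \<le> e * real n"
      using K by (simp add: divide_less_eq)
    then have "K * (1 + f n) \<le> K + (K * e) * real n"
      using K by (simp add: algebra_simps mult_left_mono)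
    moreover have "(K * e) * real n \<le> (1 / 2) * real n"
      using e by (intro mult_right_mono) auto
    ultimately show "K * (1 + f n) \<le> real n"
      by linarith
  qed
qed

lemma collocation_estimate:
  assumes mesh: "is_mesh_family th" and n: "n \<ge> 1" and R: "0 \<le> R" and lam: "cmod lam \<le> R"
    and small: "R * (1 + R * exp (2 * R)) * (1 + rlebesgue th n) \<le> n"
    and lebesgue: "1 + rlebesgue th n \<le> n"
  shows "invertible_nmat n (DmI th n lam) \<and>
    (\<forall>E. is_inverse n (DmI th n lam) E \<longrightarrow>
      supnorm (err_fun th n lam (yvec th n E))
        \<le> 1 / sqrt (real n) * (4 * exp 1 * (R + 1) * (R\<^sup>2 * exp (3 * R) + 1) / real n) ^ n)"
proof -
  have "0 \<le> rlebesgue th n"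
    using interpolation_nodes.Lam_nonneg[OF mesh_interpolation_nodes[OF mesh n]] .
  then have "R\<^sup>2 * exp (3 * R) * (1 + rlebesgue th n) * (R + 1) ^ n / fact n
      \<le> 1 / sqrt (real n) * (4 * exp 1 * (R + 1) * (R\<^sup>2 * exp (3 * R) + 1) / real n) ^ n"
    using n R lebesgue by (intro factorial_decay_le) auto
  then show ?thesis
    using invertible_DmI[OF mesh n lam small] supnorm_err_fun_le[OF mesh n lam small]
    by (blast intro: order_trans)
qed

theorem lemma5p1:
  fixes th :: "nat \<Rightarrow> nat \<Rightarrow> real" and U :: "complex set"
  assumes "is_mesh_family th"
    and "(\<lambda>n. rlebesgue th n / real n) \<longlonglongrightarrow> 0"
    and "compact U"
  shows "\<exists>N::nat. \<exists>C::real. C > 0 \<and>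
    (\<forall>n\<ge>N. \<forall>lam\<in>U. invertible_nmat n (DmI th n lam) \<and>
       (\<forall>E. is_inverse n (DmI th n lam) E \<longrightarrow>
          supnorm (err_fun th n lam (yvec th n E)) \<le> 1 / sqrt (real n) * (C / real n) ^ n))"
proof -
  obtain R where R: "0 \<le> R" "\<And>z. z \<in> U \<Longrightarrow> cmod z \<le> R"
    using compact_imp_bounded[OF assms(3)] unfolding bounded_iff by (metis norm_ge_zero order_trans)
  have "eventually (\<lambda>n. R * (1 + R * exp (2 * R)) * (1 + rlebesgue th n) \<le> n) sequentially"
    using R by (intro eventually_mult_one_plus_le[OF assms(2)]) auto
  moreover have "eventually (\<lambda>n. 1 + rlebesgue th n \<le> n) sequentially"
    using eventually_mult_one_plus_le[OF assms(2), of 1] by simp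
  ultimately obtain N where N: "\<And>n. n \<ge> N \<Longrightarrow> n \<ge> 1 \<and>
      R * (1 + R * exp (2 * R)) * (1 + rlebesgue th n) \<le> n \<and> 1 + rlebesgue th n \<le> n"
    using eventually_ge_at_top[of 1] unfolding eventually_sequentially by (metis (no_types) max.bounded_iff)
  have "0 < 4 * exp 1 * (R + 1) * (R\<^sup>2 * exp (3 * R) + 1)"
    using R by (intro mult_pos_pos add_nonneg_pos) auto
  then show ?thesis
    using collocation_estimate[OF assms(1) _ R(1) R(2)] N by blast
qed

end
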